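(* Let $T$ be a valid physical transformation of a system of $N$ elementary toy systems that is non-entangling and preserves the amount of information stored in each elementary subsystem, i.e. for every valid epistemic state $E$ and every $i\in\{1,\dots,N\}$ the marginal of $T(E)$ on subsystem $i$ has the same number of ontic states as the marginal of $E$ on subsystem $i$. Then $T$ is local: there exist permutations $T_1,\dots,T_N$ of $\{1,2,3,4\}$ such that $T(o_1,\dots,o_N) = (T_1(o_1),\dots,T_N(o_N))$ for all ontic states.
   Context: In Spekkens' toy theory, ontic states of $N$ elementary systems are elements of $\{1,2,3,4\}^N$, and an epistemic state is a set of ontic states (its ontic basis); only certain epistemic states are valid (those satisfying the knowledge balance principle globally and on all subsystems; equivalently, those equal to the set of ontic states fixed by some toy stabilizer group). The marginal of an epistemic state on subsystem $i$ is its projection onto the $i$-th coordinate. A physical transformation is a map $T$ on ontic states, acting on epistemic states by $T(E) = \{T(o): o\in E\}$; it is valid if it maps valid epistemic states to valid epistemic states, and valid transformations are permutations of the ontic states. A product state with respect to a division of the systems into groups $A_1,\dots,A_k$ is a Cartesian product of valid epistemic states on the groups. A transformation is non-entangling if, for every division into groups $A_1,\dots,A_k$, it maps every product state with respect to that division to a product state with respect to the same division. *)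

theory Defs
  imports "HOL-Library.FuncSet"
begin

text \<open>Elementary systems are indexed by natural numbers; a collection of
  systems is a finite index set I (the N systems of the paper are indexed by
  {..<N}, i.e. 0,...,N-1).\<close>

definition ontic_on :: "nat set \<Rightarrow> (nat \<Rightarrow> nat) set" where
  "ontic_on I = PiE I (\<lambda>_. {1..4})"

text \<open>Single-system toy operators I, X, Z, Y encoded as pairs of booleans
  (x,z): I=(F,F), X=(T,F), Z=(F,T), Y=(T,T). Their values on ontic states:\<close>

fun toy_val1 :: "bool \<times> bool \<Rightarrow> nat \<Rightarrow> int" where
  "toy_val1 (False, False) w = 1"
| "toy_val1 (True, False) w = (if w \<in> {1, 3} then 1 else -1)"
| "toy_val1 (False, True) w = (if w \<in> {1, 2} then 1 else -1)"
| "toy_val1 (True, True) w = (if w \<in> {1, 4} then 1 else -1)"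

text \<open>A toy operator on systems I: a sign and a tensor product of single
  system toy operators (identity outside I).\<close>

type_synonym toy_op = "int \<times> (nat \<Rightarrow> bool \<times> bool)"

definition toy_op_on :: "nat set \<Rightarrow> toy_op \<Rightarrow> bool" where
  "toy_op_on I g \<longleftrightarrow> fst g \<in> {1, -1} \<and> (\<forall>i. i \<notin> I \<longrightarrow> snd g i = (False, False))"

definition toy_id :: toy_op where
  "toy_id = (1, \<lambda>_. (False, False))"

definition toy_minus_id :: toy_op where
  "toy_minus_id = (-1, \<lambda>_. (False, False))"

definition toy_mult :: "toy_op \<Rightarrow> toy_op \<Rightarrow> toy_op" where
  "toy_mult g h = (fst g * fst h,
     \<lambda>i. (fst (snd g i) \<noteq> fst (snd h i), snd (snd g i) \<noteq> snd (snd h i)))"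

text \<open>Commutation: the number of positions at which the two single-system
  operators are distinct and both non-identity is even.\<close>

definition anticomm1 :: "bool \<times> bool \<Rightarrow> bool \<times> bool \<Rightarrow> bool" where
  "anticomm1 p q \<longleftrightarrow> ((fst p \<and> snd q) \<noteq> (snd p \<and> fst q))"

definition toy_commute :: "nat set \<Rightarrow> toy_op \<Rightarrow> toy_op \<Rightarrow> bool" where
  "toy_commute I g h \<longleftrightarrow> even (card {i \<in> I. anticomm1 (snd g i) (snd h i)})"

definition toy_value :: "nat set \<Rightarrow> toy_op \<Rightarrow> (nat \<Rightarrow> nat) \<Rightarrow> int" where
  "toy_value I g w = fst g * (\<Prod>i\<in>I. toy_val1 (snd g i) (w i))"

definition toy_stabilizer_group :: "nat set \<Rightarrow> toy_op set \<Rightarrow> bool" where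
  "toy_stabilizer_group I S \<longleftrightarrow>
     (\<forall>g\<in>S. toy_op_on I g) \<and> toy_id \<in> S \<and>
     (\<forall>g\<in>S. \<forall>h\<in>S. toy_mult g h \<in> S) \<and>
     toy_minus_id \<notin> S \<and>
     (\<forall>g\<in>S. \<forall>h\<in>S. toy_commute I g h)"

definition valid_epi_on :: "nat set \<Rightarrow> (nat \<Rightarrow> nat) set \<Rightarrow> bool" where
  "valid_epi_on I E \<longleftrightarrow>
     (\<exists>S. toy_stabilizer_group I S \<and>
          E = {w \<in> ontic_on I. \<forall>g\<in>S. toy_value I g w = 1})"

abbreviation valid_epi :: "nat \<Rightarrow> (nat \<Rightarrow> nat) set \<Rightarrow> bool" where
  "valid_epi N E \<equiv> valid_epi_on {..<N} E"

definition marginal :: "nat \<Rightarrow> (nat \<Rightarrow> nat) set \<Rightarrow> nat set" where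
  "marginal i E = (\<lambda>w. w i) ` E"

definition valid_transformation :: "nat \<Rightarrow> ((nat \<Rightarrow> nat) \<Rightarrow> (nat \<Rightarrow> nat)) \<Rightarrow> bool" where
  "valid_transformation N T \<longleftrightarrow>
     bij_betw T (ontic_on {..<N}) (ontic_on {..<N}) \<and>
     (\<forall>E. valid_epi N E \<longrightarrow> valid_epi N (T ` E))"

definition division :: "nat \<Rightarrow> nat set set \<Rightarrow> bool" where
  "division N P \<longleftrightarrow> \<Union>P = {..<N} \<and> {} \<notin> P \<and>
     (\<forall>A\<in>P. \<forall>B\<in>P. A \<noteq> B \<longrightarrow> A \<inter> B = {})"

definition product_state :: "nat \<Rightarrow> nat set set \<Rightarrow> (nat \<Rightarrow> nat) set \<Rightarrow> bool" where
  "product_state N P E \<longleftrightarrow>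
     (\<exists>F. (\<forall>A\<in>P. valid_epi_on A (F A)) \<and>
          E = {w \<in> ontic_on {..<N}. \<forall>A\<in>P. restrict w A \<in> F A})"

definition non_entangling :: "nat \<Rightarrow> ((nat \<Rightarrow> nat) \<Rightarrow> (nat \<Rightarrow> nat)) \<Rightarrow> bool" where
  "non_entangling N T \<longleftrightarrow>
     (\<forall>P. division N P \<longrightarrow>
        (\<forall>E. product_state N P E \<longrightarrow> product_state N P (T ` E)))"

end

theory Submission
  imports Defs
begin

text \<open>Fix a system i and ontic states w, w' with w i = w' i. For every two-element set
  p \<ni> w i, the cylinder {v. v i \<in> p} is a valid product state for the division into single
  systems, so its image under T is again a product of single-system sets G j. Preservation of
  marginal sizes forces |G i| = 2 and G j = {1..4} for j \<noteq> i. If T w i \<noteq> T w' i, then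
  G i = {T w i, T w' i} would not depend on p, so two different cylinders would have the same
  image, contradicting injectivity of T. Hence the i-th output of T depends only on the i-th
  input, and the resulting single-system maps are permutations because T is.\<close>

lemma ontic_on_mem: "w \<in> ontic_on I \<Longrightarrow> i \<in> I \<Longrightarrow> w i \<in> {1..4}"
  unfolding ontic_on_def by (rule PiE_mem)

lemma ontic_on_undefined: "w \<in> ontic_on I \<Longrightarrow> i \<notin> I \<Longrightarrow> w i = undefined"
  unfolding ontic_on_def by (rule PiE_arb)

lemma ontic_on_const: "x \<in> {1..4} \<Longrightarrow> (\<lambda>j\<in>I. x) \<in> ontic_on I"
  by (simp add: ontic_on_def)

lemma ontic_on_filter_eq_PiE:
  assumes "\<And>j. j \<in> I \<Longrightarrow> G j \<subseteq> {1..4}"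
  shows "{w \<in> ontic_on I. \<forall>j\<in>I. w j \<in> G j} = PiE I G"
  using assms by (force simp: ontic_on_def PiE_iff extensional_def)

lemma marginal_PiE:
  assumes "j \<in> I" "\<And>k. k \<in> I \<Longrightarrow> G k \<noteq> {}"
  shows "marginal j (PiE I G) = G j"
  using assms by (simp add: marginal_def image_projection_PiE PiE_eq_empty_iff)

lemma subset_ontic_on_singleton_eq_PiE:
  assumes "F \<subseteq> ontic_on {j}"
  shows "F = PiE {j} (\<lambda>_. marginal j F)"
proof (intro equalityI subsetI)
  fix f assume "f \<in> F"
  then show "f \<in> PiE {j} (\<lambda>_. marginal j F)"
    using assms by (auto simp: marginal_def ontic_on_def PiE_iff)
next
  fix f assume "f \<in> PiE {j} (\<lambda>_. marginal j F)"
  then obtain g where "g \<in> F" "g j = f j" "f \<in> extensional {j}"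
    by (auto simp: marginal_def PiE_iff)
  moreover have "g \<in> extensional {j}" using \<open>g \<in> F\<close> assms by (auto simp: ontic_on_def PiE_iff)
  ultimately show "f \<in> F" by (metis extensionalityI singletonD)
qed

lemma two_subsets_of_four:
  assumes "card p = 2" "p \<subseteq> {1..4::nat}"
  shows "p \<in> {{1,2},{3,4},{1,3},{2,4},{1,4},{2,3}}"
proof -
  obtain a b where "p = {a,b}" "a < b"
    using assms(1) by (metis card_2_iff insert_commute linorder_neqE_nat)
  moreover have "1 \<le> a" "b \<le> 4" using assms(2) calculation by auto
  ultimately have "(a = 1 \<or> a = 2 \<or> a = 3) \<and> (b = 2 \<or> b = 3 \<or> b = 4)" by linarith
  with \<open>p = {a,b}\<close> \<open>a < b\<close> show ?thesis by (elim conjE disjE) simp_all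
qed

lemma two_element_set_eq_toy_constraint:
  assumes "card p = 2" "p \<subseteq> {1..4::nat}"
  shows "\<exists>op\<in>{(True,False),(False,True),(True,True)}. \<exists>s\<in>{1,-1::int}.
           \<forall>x\<in>{1,2,3,4}. s * toy_val1 op x = 1 \<longleftrightarrow> x \<in> p"
  using two_subsets_of_four[OF assms] by (elim insertE emptyE) simp_all

lemma toy_value_single_site:
  assumes "finite I" "i \<in> I"
  shows "toy_value I (s, \<lambda>j. if j = i then op else (False, False)) w = s * toy_val1 op (w i)"
proof -
  have "(\<Prod>j\<in>I. toy_val1 (if j = i then op else (False, False)) (w j))
        = (\<Prod>j\<in>I. if j = i then toy_val1 op (w j) else 1)"
    by (rule prod.cong) auto
  then show ?thesis using assms by (simp add: toy_value_def prod.delta)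
qed

lemma toy_commute_refl: "toy_commute I g g"
proof -
  have "\<not> anticomm1 p p" for p by (auto simp: anticomm1_def)
  then show ?thesis by (simp add: toy_commute_def)
qed

lemma toy_commute_toy_id: "toy_commute I toy_id g" "toy_commute I g toy_id"
  by (simp_all add: toy_commute_def anticomm1_def toy_id_def)

lemma toy_mult_toy_id: "toy_mult toy_id g = g" "toy_mult g toy_id = g"
  by (simp_all add: toy_mult_def toy_id_def)

lemma toy_op_on_toy_id: "toy_op_on I toy_id"
  by (simp add: toy_op_on_def toy_id_def)

lemma valid_epi_on_ontic_on: "valid_epi_on I (ontic_on I)"
proof -
  have "toy_stabilizer_group I {toy_id}"
    by (simp add: toy_stabilizer_group_def toy_op_on_toy_id toy_mult_toy_id toy_commute_refl)
      (simp add: toy_id_def toy_minus_id_def)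
  moreover have "ontic_on I = {w \<in> ontic_on I. \<forall>g\<in>{toy_id}. toy_value I g w = 1}"
    by (simp add: toy_value_def toy_id_def)
  ultimately show ?thesis unfolding valid_epi_on_def by blast
qed

lemma valid_epi_on_single_generator:
  assumes "toy_op_on I g" "snd g i \<noteq> (False, False)"
  shows "valid_epi_on I {w \<in> ontic_on I. toy_value I g w = 1}"
proof -
  have "fst g * fst g = 1" using assms(1) by (auto simp: toy_op_on_def)
  then have "toy_mult g g = toy_id"
    by (simp add: toy_mult_def toy_id_def)
  moreover have "g \<noteq> toy_minus_id" "toy_id \<noteq> toy_minus_id"
    using assms(2) by (auto simp: toy_minus_id_def toy_id_def)
  ultimately have "toy_stabilizer_group I {toy_id, g}"
    using assms(1) by (simp add: toy_stabilizer_group_def toy_op_on_toy_id toy_mult_toy_id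
        toy_commute_refl toy_commute_toy_id)
  moreover have "{w \<in> ontic_on I. toy_value I g w = 1}
      = {w \<in> ontic_on I. \<forall>h\<in>{toy_id, g}. toy_value I h w = 1}"
    by (simp add: toy_value_def toy_id_def)
  ultimately show ?thesis unfolding valid_epi_on_def by blast
qed

lemma valid_epi_on_site_constraint:
  assumes "finite I" "i \<in> I" "card p = 2" "p \<subseteq> {1..4}"
  shows "valid_epi_on I {w \<in> ontic_on I. w i \<in> p}"
proof -
  obtain op s where "op \<noteq> (False, False)" "s \<in> {1, -1}"
    and constraint: "\<forall>x\<in>{1,2,3,4}. s * toy_val1 op x = 1 \<longleftrightarrow> x \<in> p"
    using two_element_set_eq_toy_constraint[OF assms(3,4)] by blast
  define g :: toy_op where "g = (s, \<lambda>j. if j = i then op else (False, False))"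
  have "toy_op_on I g" "snd g i \<noteq> (False, False)"
    using assms(2) \<open>s \<in> {1, -1}\<close> \<open>op \<noteq> (False, False)\<close> by (auto simp: toy_op_on_def g_def)
  moreover have "toy_value I g w = 1 \<longleftrightarrow> w i \<in> p" if "w \<in> ontic_on I" for w
  proof -
    have "w i \<in> {1,2,3,4}" using ontic_on_mem[OF that assms(2)] by auto
    then show ?thesis
      using constraint unfolding g_def toy_value_single_site[OF assms(1,2)] by blast
  qed
  then have "{w \<in> ontic_on I. w i \<in> p} = {w \<in> ontic_on I. toy_value I g w = 1}"
    by blast
  ultimately show ?thesis using valid_epi_on_single_generator[of I g i] by simp
qed

definition cylinder :: "nat \<Rightarrow> nat \<Rightarrow> nat set \<Rightarrow> (nat \<Rightarrow> nat) set" where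
  "cylinder N i p = PiE {..<N} (\<lambda>j. if j = i then p else {1..4})"

lemma cylinder_eq:
  assumes "i < N" "p \<subseteq> {1..4}"
  shows "cylinder N i p = {w \<in> ontic_on {..<N}. w i \<in> p}"
proof -
  have "{w \<in> ontic_on {..<N}. w i \<in> p}
      = {w \<in> ontic_on {..<N}. \<forall>j\<in>{..<N}. w j \<in> (if j = i then p else {1..4})}"
    using assms(1) ontic_on_mem[of _ "{..<N}"] by auto
  also have "\<dots> = cylinder N i p"
    using assms(2) by (subst ontic_on_filter_eq_PiE) (auto simp: cylinder_def)
  finally show ?thesis ..
qed

lemma valid_epi_cylinder:
  assumes "i < N" "card p = 2" "p \<subseteq> {1..4}"
  shows "valid_epi N (cylinder N i p)"
  using valid_epi_on_site_constraint[of "{..<N}" i p] assms by (simp add: cylinder_eq)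

lemma marginal_cylinder:
  assumes "j < N" "p \<noteq> {}"
  shows "marginal j (cylinder N i p) = (if j = i then p else {1..4})"
  unfolding cylinder_def using assms by (subst marginal_PiE) auto

definition finest_division :: "nat \<Rightarrow> nat set set" where
  "finest_division N = (\<lambda>j. {j}) ` {..<N}"

lemma division_finest_division: "division N (finest_division N)"
  by (auto simp: division_def finest_division_def)

lemma product_state_finest_division_PiE:
  assumes "\<And>j. j < N \<Longrightarrow> G j \<subseteq> {1..4}" "\<And>j. j < N \<Longrightarrow> valid_epi_on {j} (PiE {j} G)"
  shows "product_state N (finest_division N) (PiE {..<N} G)"
proof -
  have "PiE {..<N} G = {w \<in> ontic_on {..<N}. \<forall>j\<in>{..<N}. w j \<in> G j}"
    using ontic_on_filter_eq_PiE[of "{..<N}" G] assms(1) by simp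
  also have "\<dots> = {w \<in> ontic_on {..<N}. \<forall>A\<in>finest_division N. restrict w A \<in> PiE A G}"
    by (simp add: finest_division_def restrict_PiE_iff)
  finally have "PiE {..<N} G
      = {w \<in> ontic_on {..<N}. \<forall>A\<in>finest_division N. restrict w A \<in> PiE A G}" .
  moreover have "\<forall>A\<in>finest_division N. valid_epi_on A (PiE A G)"
    using assms(2) by (auto simp: finest_division_def)
  ultimately show ?thesis
    unfolding product_state_def by (intro exI[of _ "\<lambda>A. PiE A G"]) simp
qed

lemma product_state_finest_division_imp_PiE:
  assumes "product_state N (finest_division N) D"
  obtains G where "\<And>j. j < N \<Longrightarrow> G j \<subseteq> {1..4}" "D = PiE {..<N} G"
proof -
  obtain F where F: "\<forall>A\<in>finest_division N. valid_epi_on A (F A)"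
    and D: "D = {w \<in> ontic_on {..<N}. \<forall>A\<in>finest_division N. restrict w A \<in> F A}"
    using assms unfolding product_state_def by (elim exE conjE)
  have F_sub: "F {j} \<subseteq> ontic_on {j}" if "j < N" for j
    using F that unfolding finest_division_def valid_epi_on_def by blast
  define G where "G j = marginal j (F {j})" for j
  have F_eq: "F {j} = PiE {j} (\<lambda>_. G j)" if "j < N" for j
    unfolding G_def using F_sub[OF that] by (rule subset_ontic_on_singleton_eq_PiE)
  have G_sub: "G j \<subseteq> {1..4}" if "j < N" for j
    using F_sub[OF that] ontic_on_mem[of _ "{j}" j] by (auto simp: G_def marginal_def)
  have "D = {w \<in> ontic_on {..<N}. \<forall>j\<in>{..<N}. w j \<in> G j}"
    unfolding D finest_division_def by (simp add: F_eq restrict_PiE_iff)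
  also have "\<dots> = PiE {..<N} G"
    using G_sub by (intro ontic_on_filter_eq_PiE) simp
  finally show ?thesis using that G_sub by blast
qed

lemma product_state_cylinder:
  assumes "i < N" "card p = 2" "p \<subseteq> {1..4}"
  shows "product_state N (finest_division N) (cylinder N i p)"
  unfolding cylinder_def
proof (rule product_state_finest_division_PiE)
  fix j assume "j < N"
  show "(if j = i then p else {1..4}) \<subseteq> {1..4}" using assms(3) by simp
  show "valid_epi_on {j} (PiE {j} (\<lambda>j. if j = i then p else {1..4}))"
  proof (cases "j = i")
    case True
    have "{w \<in> ontic_on {i}. w i \<in> p} = PiE {i} (\<lambda>j. if j = i then p else {1..4})"
      using ontic_on_filter_eq_PiE[of "{i}" "\<lambda>j. if j = i then p else {1..4}"] assms(3) by simp
    then show ?thesis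
      using valid_epi_on_site_constraint[of "{i}" i p] assms(2,3) True by simp
  next
    case False
    then have "PiE {j} (\<lambda>j. if j = i then p else {1..4}) = ontic_on {j}"
      by (auto simp: ontic_on_def intro!: PiE_cong)
    then show ?thesis using valid_epi_on_ontic_on by simp
  qed
qed

lemma ex_local_factors:
  assumes maps: "\<And>w. w \<in> ontic_on I \<Longrightarrow> T w \<in> ontic_on I"
    and coordinatewise: "\<And>w w' i. w \<in> ontic_on I \<Longrightarrow> w' \<in> ontic_on I \<Longrightarrow> i \<in> I \<Longrightarrow>
      w i = w' i \<Longrightarrow> T w i = T w' i"
  shows "\<exists>Ts. \<forall>w\<in>ontic_on I. T w = (\<lambda>i\<in>I. Ts i (w i))"
proof (intro exI ballI ext)
  fix w i assume w: "w \<in> ontic_on I"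
  show "T w i = (\<lambda>i\<in>I. T (\<lambda>j\<in>I. w i) i) i"
  proof (cases "i \<in> I")
    case True
    then have "w i \<in> {1..4}" using w by (rule ontic_on_mem[rotated])
    then show ?thesis using coordinatewise[OF w ontic_on_const] True by simp
  next
    case False
    then show ?thesis using ontic_on_undefined[OF maps[OF w]] by simp
  qed
qed

lemma local_factor_bij:
  assumes bij: "bij_betw T (ontic_on I) (ontic_on I)"
    and local: "\<forall>w\<in>ontic_on I. T w = (\<lambda>i\<in>I. Ts i (w i))"
    and "i \<in> I"
  shows "bij_betw (Ts i) {1..4} {1..4}"
proof -
  have factor: "T w i = Ts i (w i)" if "w \<in> ontic_on I" for w
    using local that \<open>i \<in> I\<close> by simp
  have "Ts i ` {1..4} \<subseteq> {1..4}"
  proof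
    fix y assume "y \<in> Ts i ` {1..4}"
    then obtain x where x: "x \<in> {1..4}" "y = Ts i x" by blast
    have "T (\<lambda>j\<in>I. x) \<in> ontic_on I"
      using bij ontic_on_const[OF x(1)] by (auto simp: bij_betw_def)
    then have "T (\<lambda>j\<in>I. x) i \<in> {1..4}" using \<open>i \<in> I\<close> by (rule ontic_on_mem)
    then show "y \<in> {1..4}"
      using factor[OF ontic_on_const[OF x(1)]] x(2) \<open>i \<in> I\<close> by simp
  qed
  moreover have "{1..4} \<subseteq> Ts i ` {1..4}"
  proof
    fix y :: nat assume y: "y \<in> {1..4}"
    then obtain u where u: "u \<in> ontic_on I" "T u = (\<lambda>j\<in>I. y)"
      using bij ontic_on_const[OF y] by (metis bij_betw_imp_surj_on imageE)
    then have "Ts i (u i) = y" using factor[OF u(1)] \<open>i \<in> I\<close> by simp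
    moreover have "u i \<in> {1..4}" using u(1) \<open>i \<in> I\<close> by (rule ontic_on_mem)
    ultimately show "y \<in> Ts i ` {1..4}" by blast
  qed
  ultimately have "Ts i ` {1..4} = {1..4}" ..
  then show ?thesis
    by (simp add: bij_betw_def finite_surj_inj)
qed

locale info_preserving_non_entangling =
  fixes N :: nat and T :: "(nat \<Rightarrow> nat) \<Rightarrow> (nat \<Rightarrow> nat)"
  assumes valid_transformation: "valid_transformation N T"
    and non_entangling: "non_entangling N T"
    and marginal_card: "\<forall>E i. valid_epi N E \<longrightarrow> i < N \<longrightarrow>
           card (marginal i (T ` E)) = card (marginal i E)"
begin

lemma bij_betw_ontic_on: "bij_betw T (ontic_on {..<N}) (ontic_on {..<N})"
  using valid_transformation by (simp add: valid_transformation_def)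

lemma image_cylinder:
  assumes "i < N" "card p = 2" "p \<subseteq> {1..4}"
    and "w \<in> cylinder N i p" "w' \<in> cylinder N i p" "T w i \<noteq> T w' i"
  shows "T ` cylinder N i p = PiE {..<N} (\<lambda>j. if j = i then {T w i, T w' i} else {1..4})"
proof -
  have "product_state N (finest_division N) (T ` cylinder N i p)"
    using non_entangling division_finest_division product_state_cylinder[OF assms(1-3)]
    unfolding non_entangling_def by simp
  then obtain G where G_sub: "\<And>j. j < N \<Longrightarrow> G j \<subseteq> {1..4}"
    and image_eq: "T ` cylinder N i p = PiE {..<N} G"
    using product_state_finest_division_imp_PiE by blast
  have "p \<noteq> {}" using assms(2) by auto
  have "PiE {..<N} G \<noteq> {}" using image_eq assms(4) by auto
  then have "G k \<noteq> {}" if "k < N" for k using that by (auto simp: PiE_eq_empty_iff)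
  have card_G: "card (G j) = card (if j = i then p else {1..4})" if "j < N" for j
  proof -
    have "G j = marginal j (T ` cylinder N i p)"
      using image_eq that marginal_PiE[of j "{..<N}" G] \<open>\<And>k. k < N \<Longrightarrow> G k \<noteq> {}\<close> by simp
    moreover have "card (marginal j (T ` cylinder N i p)) = card (marginal j (cylinder N i p))"
      using marginal_card valid_epi_cylinder[OF assms(1-3)] that by simp
    ultimately show ?thesis using marginal_cylinder[OF that \<open>p \<noteq> {}\<close>] by simp
  qed
  have "{T w i, T w' i} \<subseteq> G i"
    using image_eq assms(1,4,5) by (auto simp: PiE_iff)
  moreover have "card (G i) = 2" using card_G[OF assms(1)] assms(2) by simp
  ultimately have "G i = {T w i, T w' i}"
    using assms(6) by (intro card_seteq[symmetric]) (auto intro: card_ge_0_finite)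
  moreover have "G j = {1..4}" if "j < N" "j \<noteq> i" for j
    using card_G[OF that(1)] that G_sub[OF that(1)] by (simp add: card_subset_eq)
  ultimately show ?thesis
    unfolding image_eq by (intro PiE_cong) auto
qed

lemma image_coordinate_eq:
  assumes "w \<in> ontic_on {..<N}" "w' \<in> ontic_on {..<N}" "i < N" "w i = w' i"
  shows "T w i = T w' i"
proof (rule ccontr)
  assume differ: "T w i \<noteq> T w' i"
  define a where "a = w i"
  have "a \<in> {1..4}" using ontic_on_mem[OF assms(1)] assms(3) by (simp add: a_def)
  define b :: nat where "b = (if a = 1 then 2 else 1)"
  define c :: nat where "c = (if a \<le> 2 then 3 else 2)"
  have bc: "b \<in> {1..4}" "c \<in> {1..4}" "b \<noteq> a" "c \<noteq> a" "b \<noteq> c"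
    using \<open>a \<in> {1..4}\<close> by (auto simp: b_def c_def)
  have image_eq: "T ` cylinder N i {a, x} = PiE {..<N} (\<lambda>j. if j = i then {T w i, T w' i} else {1..4})"
    if "x \<in> {1..4}" "x \<noteq> a" for x
  proof (rule image_cylinder)
    show "{a, x} \<subseteq> {1..4}" "card {a, x} = 2" using that \<open>a \<in> {1..4}\<close> by auto
    then show "w \<in> cylinder N i {a, x}" "w' \<in> cylinder N i {a, x}"
      using assms by (simp_all add: a_def cylinder_eq)
  qed (use assms(3) differ in simp_all)
  have in_ontic: "cylinder N i {a, x} \<subseteq> ontic_on {..<N}" if "x \<in> {1..4}" for x
    using assms(3) that \<open>a \<in> {1..4}\<close> by (simp add: cylinder_eq)
  have "T ` cylinder N i {a, b} = T ` cylinder N i {a, c}"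
    using image_eq[of b] image_eq[of c] bc by simp
  then have "cylinder N i {a, b} = cylinder N i {a, c}"
    using inj_on_image_eq_iff[OF bij_betw_imp_inj_on[OF bij_betw_ontic_on] in_ontic in_ontic] bc(1,2)
    by simp
  then have "marginal i (cylinder N i {a, b}) = marginal i (cylinder N i {a, c})" by simp
  then have "{a, b} = {a, c}" unfolding marginal_cylinder[OF assms(3) insert_not_empty] by simp
  then show False using bc by (simp add: doubleton_eq_iff)
qed

end

theorem mainTheorem9:
  fixes N :: nat and T :: "(nat \<Rightarrow> nat) \<Rightarrow> (nat \<Rightarrow> nat)"
  assumes "valid_transformation N T"
    and "non_entangling N T"
    and "\<forall>E i. valid_epi N E \<longrightarrow> i < N \<longrightarrow>
           card (marginal i (T ` E)) = card (marginal i E)"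
  shows "\<exists>Ts :: nat \<Rightarrow> nat \<Rightarrow> nat.
           (\<forall>i<N. bij_betw (Ts i) {1..4} {1..4}) \<and>
           (\<forall>w\<in>ontic_on {..<N}. T w = (\<lambda>i\<in>{..<N}. Ts i (w i)))"
proof -
  interpret info_preserving_non_entangling N T
    using assms by unfold_locales
  have maps: "T w \<in> ontic_on {..<N}" if "w \<in> ontic_on {..<N}" for w
    using bij_betw_ontic_on that by (rule bij_betw_apply)
  have "T w i = T w' i"
    if "w \<in> ontic_on {..<N}" "w' \<in> ontic_on {..<N}" "i \<in> {..<N}" "w i = w' i" for w w' i
    using image_coordinate_eq[OF that(1,2) _ that(4)] that(3) by simp
  then obtain Ts where local: "\<forall>w\<in>ontic_on {..<N}. T w = (\<lambda>i\<in>{..<N}. Ts i (w i))"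
    using ex_local_factors[of "{..<N}" T, OF maps] by blast
  moreover have "\<forall>i<N. bij_betw (Ts i) {1..4} {1..4}"
    using local_factor_bij[OF bij_betw_ontic_on local] by simp
  ultimately show ?thesis by blast
qed

end
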